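(* Let $\equiv$ be the equivalence relation on $\mathfrak S_n$ generated by the pattern replacements $321\equiv231$ and $312\equiv132$: i.e., for letters $a<b<c$ occupying three consecutive positions of a permutation, one may replace $cba$ by $bca$ (and conversely) and $cab$ by $acb$ (and conversely). Then for $\sigma,\tau\in\mathfrak S_n$, one has $\mathrm{SC}(\sigma^{-1})=\mathrm{SC}(\tau^{-1})$ if and only if $\sigma\equiv\tau$.
   Context: Permutations are words $\sigma_1\cdots\sigma_n$. A word $a_1\cdots a_m$ is initially dominated if $a_1>a_j$ for all $j\ge2$; every permutation factors uniquely as $\sigma=u_1\cdots u_r$ into initially dominated words with increasing first letters, and $\mathrm{SC}(\sigma)=(|u_1|,\ldots,|u_r|)$ is its saillance composition. Pattern replacements act on letters in adjacent positions. *)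

theory Defs
  imports Main
begin

definition is_perm :: "nat \<Rightarrow> nat list \<Rightarrow> bool" where
  "is_perm n w \<longleftrightarrow> distinct w \<and> set w = {1..n}"

text \<open>Inverse permutation: the letter at position v (1-based) is the position of v in w.\<close>
definition perm_inv :: "nat list \<Rightarrow> nat list" where
  "perm_inv w = map (\<lambda>v. Suc (LEAST i. i < length w \<and> w ! i = v)) [1..<Suc (length w)]"

definition init_dominated :: "nat list \<Rightarrow> bool" where
  "init_dominated u \<longleftrightarrow> u \<noteq> [] \<and> (\<forall>j. 1 \<le> j \<and> j < length u \<longrightarrow> u ! j < u ! 0)"

definition sc_factorization :: "nat list \<Rightarrow> nat list list \<Rightarrow> bool" where
  "sc_factorization w us \<longleftrightarrow> concat us = w \<and> (\<forall>u\<in>set us. init_dominated u)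
     \<and> sorted_wrt (<) (map hd us)"

text \<open>Saillance composition: lengths of the factors of the unique factorisation.\<close>
definition SC :: "nat list \<Rightarrow> nat list" where
  "SC w = (THE c. \<exists>us. sc_factorization w us \<and> c = map length us)"

definition repl_step :: "nat list \<Rightarrow> nat list \<Rightarrow> bool" where
  "repl_step v w \<longleftrightarrow> (\<exists>xs ys a b c. a < b \<and> b < c \<and>
      ((v = xs @ [c, b, a] @ ys \<and> w = xs @ [b, c, a] @ ys) \<or>
       (v = xs @ [c, a, b] @ ys \<and> w = xs @ [a, c, b] @ ys)))"

definition perm_equiv :: "nat list \<Rightarrow> nat list \<Rightarrow> bool" where
  "perm_equiv = equivclp repl_step"

end

theory Submission
  imports Defs
begin

(* Both sides of the equivalence say that \<sigma> and \<tau> have the same set of right-to-left minima.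
   Each replacement moves the largest of three adjacent letters c across a smaller right
   neighbour while a letter smaller than c still follows, which leaves the right-to-left minima
   unchanged; conversely, the maximal letter n of a permutation can be moved to the front unless
   it is the last letter, and induction on n connects any two permutations with the same
   right-to-left minima.
   On the other side, the factors of the saillance factorisation of a word with distinct letters
   start exactly at its left-to-right maxima, so SC w records their positions; and the value v is a
   right-to-left minimum of \<sigma> iff position v of \<sigma>\<inverse> carries a left-to-right maximum. *)

subsection \<open>Right-to-left minima and the replacement equivalence\<close>

fun rtl_minima :: "'a::linorder list \<Rightarrow> 'a set" where
  "rtl_minima [] = {}"
| "rtl_minima (x # xs) = (if \<forall>u\<in>set xs. x < u then insert x (rtl_minima xs) else rtl_minima xs)"

lemma rtl_minima_append:
  "rtl_minima (xs @ ys) = {x \<in> rtl_minima xs. \<forall>u\<in>set ys. x < u} \<union> rtl_minima ys"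
  by (induction xs) auto

lemma rtl_minima_subset: "rtl_minima xs \<subseteq> set xs"
  by (induction xs) auto

lemma mem_rtl_minima_iff:
  assumes "x \<notin> set xs" "x \<notin> set ys"
  shows "x \<in> rtl_minima (xs @ x # ys) \<longleftrightarrow> (\<forall>u\<in>set ys. x < u)"
  using assms rtl_minima_subset[of xs] rtl_minima_subset[of ys] by (auto simp: rtl_minima_append)

lemma perm_equiv_refl [simp]: "perm_equiv w w"
  by (simp add: perm_equiv_def)

lemma perm_equiv_sym [sym]: "perm_equiv v w \<Longrightarrow> perm_equiv w v"
  unfolding perm_equiv_def by (rule equivclp_sym)

lemma perm_equiv_trans [trans]: "perm_equiv u v \<Longrightarrow> perm_equiv v w \<Longrightarrow> perm_equiv u w"
  unfolding perm_equiv_def by (rule equivclp_trans)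

lemma repl_step_rtl_minima: "repl_step v w \<Longrightarrow> rtl_minima v = rtl_minima w"
  unfolding repl_step_def by (elim exE conjE disjE) (auto simp: rtl_minima_append)

lemma perm_equiv_rtl_minima: "perm_equiv v w \<Longrightarrow> rtl_minima v = rtl_minima w"
  unfolding perm_equiv_def
  by (induction rule: equivclp_induct) (auto dest: repl_step_rtl_minima)

lemma repl_step_append: "repl_step v w \<Longrightarrow> repl_step (p @ v @ q) (p @ w @ q)"
  unfolding repl_step_def
  by (elim exE conjE disjE; intro exI[of _ "p @ _"] exI[of _ "_ @ q"]) auto

lemma perm_equiv_append: "perm_equiv v w \<Longrightarrow> perm_equiv (p @ v @ q) (p @ w @ q)"
  unfolding perm_equiv_def
  by (induction rule: equivclp_induct) (auto intro: equivclp_into_equivclp repl_step_append)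

subsection \<open>Permutations with equal right-to-left minima are equivalent\<close>

lemma repl_step_swap_max:
  assumes "a < c" "b < c" "a \<noteq> b"
  shows "repl_step (c # a # b # zs) (a # c # b # zs)"
proof (cases "b < a")
  case True
  then show ?thesis using assms unfolding repl_step_def
    by (intro exI[of _ "[]"] exI[of _ zs] exI[of _ b] exI[of _ a] exI[of _ c]) auto
next
  case False
  then show ?thesis using assms unfolding repl_step_def
    by (intro exI[of _ "[]"] exI[of _ zs] exI[of _ a] exI[of _ b] exI[of _ c]) auto
qed

lemma perm_equiv_move_max_to_front:
  assumes "distinct (xs @ ys)" "ys \<noteq> []" "\<forall>x\<in>set (xs @ ys). x < N"
  shows "perm_equiv (xs @ N # ys) (N # xs @ ys)"
  using assms
proof (induction xs)
  case Nil
  then show ?case by simp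
next
  case (Cons x xs)
  obtain z zs where z: "xs @ ys = z # zs"
    using Cons.prems(2) by (cases "xs @ ys") auto
  have "perm_equiv (x # xs @ N # ys) (x # N # xs @ ys)"
    using perm_equiv_append[OF Cons.IH, of "[x]" "[]"] Cons.prems by auto
  also have "perm_equiv (x # N # xs @ ys) (N # x # xs @ ys)"
    using repl_step_swap_max[of x N z zs] Cons.prems z
    unfolding perm_equiv_def by (intro converse_r_into_equivclp) auto
  finally show ?case
    by simp
qed

lemma is_perm_Suc_split:
  assumes "is_perm (Suc n) \<sigma>"
  obtains xs ys where "\<sigma> = xs @ Suc n # ys" "is_perm n (xs @ ys)"
proof -
  have "Suc n \<in> set \<sigma>"
    using assms by (simp add: is_perm_def)
  then obtain xs ys where \<sigma>: "\<sigma> = xs @ Suc n # ys"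
    by (meson split_list)
  then have "set (xs @ ys) = {1..Suc n} - {Suc n}" "distinct (xs @ ys)"
    using assms by (auto simp: is_perm_def)
  then have "is_perm n (xs @ ys)"
    by (auto simp: is_perm_def)
  with \<sigma> show thesis by (rule that)
qed

(* Whether Suc n is the last letter is read off from the right-to-left minima, so that two
   permutations with the same minima fall into the same case. *)
lemma perm_equiv_max_last_or_first:
  assumes "is_perm (Suc n) \<sigma>"
  obtains \<rho> where "is_perm n \<rho>" "rtl_minima \<rho> = rtl_minima \<sigma> - {Suc n}"
    "perm_equiv \<sigma> (if Suc n \<in> rtl_minima \<sigma> then \<rho> @ [Suc n] else Suc n # \<rho>)"
proof -
  obtain xs ys where \<sigma>: "\<sigma> = xs @ Suc n # ys" and \<rho>: "is_perm n (xs @ ys)"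
    using assms by (rule is_perm_Suc_split)
  have less: "\<forall>x\<in>set (xs @ ys). x < Suc n"
    using \<rho> by (auto simp: is_perm_def)
  then have max_notin: "Suc n \<notin> rtl_minima (xs @ ys)"
    using rtl_minima_subset by blast
  show thesis
  proof (cases "ys = []")
    case True
    then have "rtl_minima \<sigma> = insert (Suc n) (rtl_minima (xs @ ys))"
      using \<sigma> less rtl_minima_subset[of xs] by (auto simp: rtl_minima_append)
    then show thesis
      using that[OF \<rho>] \<sigma> True max_notin by auto
  next
    case False
    then have equiv: "perm_equiv \<sigma> (Suc n # xs @ ys)"
      using \<sigma> \<rho> less perm_equiv_move_max_to_front by (auto simp: is_perm_def)
    have "rtl_minima (Suc n # xs @ ys) = rtl_minima (xs @ ys)"
      using less False by (cases ys) force+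
    then have "rtl_minima \<sigma> = rtl_minima (xs @ ys)"
      using perm_equiv_rtl_minima[OF equiv] by simp
    then show thesis
      using that[OF \<rho>] equiv max_notin by auto
  qed
qed

lemma perm_equiv_if_rtl_minima_eq:
  "is_perm n \<sigma> \<Longrightarrow> is_perm n \<tau> \<Longrightarrow> rtl_minima \<sigma> = rtl_minima \<tau> \<Longrightarrow> perm_equiv \<sigma> \<tau>"
proof (induction n arbitrary: \<sigma> \<tau>)
  case 0
  then show ?case by (simp add: is_perm_def)
next
  case (Suc n)
  let ?N = "Suc n" and ?last = "Suc n \<in> rtl_minima \<sigma>"
  obtain \<rho> where \<rho>: "is_perm n \<rho>" "rtl_minima \<rho> = rtl_minima \<sigma> - {?N}"
    and \<sigma>\<rho>: "perm_equiv \<sigma> (if ?last then \<rho> @ [?N] else ?N # \<rho>)"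
    using perm_equiv_max_last_or_first[OF Suc.prems(1)] .
  obtain \<rho>' where \<rho>': "is_perm n \<rho>'" "rtl_minima \<rho>' = rtl_minima \<tau> - {?N}"
    and \<tau>\<rho>': "perm_equiv \<tau> (if ?last then \<rho>' @ [?N] else ?N # \<rho>')"
    using perm_equiv_max_last_or_first[OF Suc.prems(2)] Suc.prems(3) by metis
  have "perm_equiv \<rho> \<rho>'"
    using Suc.IH \<rho> \<rho>' Suc.prems(3) by simp
  then have "perm_equiv (if ?last then \<rho> @ [?N] else ?N # \<rho>) (if ?last then \<rho>' @ [?N] else ?N # \<rho>')"
    using perm_equiv_append[of \<rho> \<rho>' "[]" "[?N]"] perm_equiv_append[of \<rho> \<rho>' "[?N]" "[]"] by simp
  with \<sigma>\<rho> \<tau>\<rho>' show ?case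
    by (meson perm_equiv_sym perm_equiv_trans)
qed

subsection \<open>Saillance compositions and left-to-right maxima\<close>

function sc_factors :: "'a::linorder list \<Rightarrow> 'a list list" where
  "sc_factors [] = []"
| "sc_factors (x # xs) =
     (x # takeWhile (\<lambda>y. y < x) xs) # sc_factors (dropWhile (\<lambda>y. y < x) xs)"
  by pat_completeness auto
termination
  by (relation "measure length") (auto simp: le_imp_less_Suc length_dropWhile_le)

lemma init_dominated_Cons_iff: "init_dominated (x # t) \<longleftrightarrow> (\<forall>y\<in>set t. y < x)"
  unfolding init_dominated_def by (auto simp: all_set_conv_all_nth nth_Cons split: nat.splits)

lemma hd_dropWhile_less:
  fixes x :: "'a::linorder"
  assumes "x \<notin> set xs" "dropWhile (\<lambda>y. y < x) xs \<noteq> []"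
  shows "x < hd (dropWhile (\<lambda>y. y < x) xs)"
  using assms hd_dropWhile[OF assms(2)] hd_in_set[OF assms(2)]
  by (metis linorder_neqE set_dropWhileD)

lemma sc_factorization_unique: "sc_factorization w us \<Longrightarrow> us = sc_factors w"
proof (induction us arbitrary: w)
  case Nil
  then show ?case by (simp add: sc_factorization_def)
next
  case (Cons u us)
  then have "init_dominated u"
    by (simp add: sc_factorization_def)
  moreover obtain x t where u: "u = x # t"
    using \<open>init_dominated u\<close> by (cases u) (auto simp: init_dominated_def)
  ultimately have t: "\<forall>y\<in>set t. y < x"
    by (simp add: init_dominated_Cons_iff)
  have split: "takeWhile (\<lambda>y. y < x) (t @ r) = t \<and> dropWhile (\<lambda>y. y < x) (t @ r) = r"
    if "r = [] \<or> x < hd r" for r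
    using t that by (cases r) (auto simp: takeWhile_append2 dropWhile_append2)
  have "concat us = [] \<or> x < hd (concat us)"
    using Cons.prems u
    by (cases us) (auto simp: sc_factorization_def init_dominated_def neq_Nil_conv)
  moreover have "w = x # t @ concat us"
    using Cons.prems u by (simp add: sc_factorization_def)
  ultimately have "sc_factors w = u # sc_factors (concat us)"
    using split u by simp
  moreover have "us = sc_factors (concat us)"
    using Cons by (auto simp: sc_factorization_def)
  ultimately show ?case
    by simp
qed

lemma sc_factors_hd_le: "h \<in> set (map hd (sc_factors w)) \<Longrightarrow> hd w \<le> h"
proof (induction w arbitrary: h rule: sc_factors.induct)
  case (2 x xs)
  let ?r = "dropWhile (\<lambda>y. y < x) xs"
  show ?case
  proof (cases "?r = []")
    case False
    then have "x \<le> hd ?r"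
      by (metis hd_dropWhile not_le_imp_less)
    then have "x \<le> h'" if "h' \<in> set (map hd (sc_factors ?r))" for h'
      using "2.IH"[OF that] by simp
    then show ?thesis
      using "2.prems" by auto
  qed (use "2.prems" in \<open>simp del: dropWhile_eq_Nil_conv\<close>)
qed simp

lemma sc_factorization_sc_factors: "distinct w \<Longrightarrow> sc_factorization w (sc_factors w)"
proof (induction w rule: sc_factors.induct)
  case 1
  then show ?case by (simp add: sc_factorization_def)
next
  case (2 x xs)
  let ?r = "dropWhile (\<lambda>y. y < x) xs"
  have "distinct ?r" "x \<notin> set ?r"
    using "2.prems" by (auto dest: set_dropWhileD distinct_dropWhile)
  then have "sc_factorization ?r (sc_factors ?r)" and "\<forall>h\<in>set (map hd (sc_factors ?r)). x < h"
    using "2.IH" "2.prems" hd_dropWhile_less[of x xs] sc_factors_hd_le[of _ ?r]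
    by (fastforce dest: set_dropWhileD)+
  then show ?case
    by (auto simp: sc_factorization_def init_dominated_Cons_iff dest: set_takeWhileD)
qed

lemma SC_eq_map_length_sc_factors: "distinct w \<Longrightarrow> SC w = map length (sc_factors w)"
  unfolding SC_def
  by (rule the_equality) (auto intro: sc_factorization_sc_factors dest: sc_factorization_unique)

fun ltr_maxima_mask :: "'a::linorder \<Rightarrow> 'a list \<Rightarrow> bool list" where
  "ltr_maxima_mask m [] = []"
| "ltr_maxima_mask m (x # xs) = (m < x) # ltr_maxima_mask (max m x) xs"

fun composition_mask :: "nat list \<Rightarrow> bool list" where
  "composition_mask [] = []"
| "composition_mask (k # ks) = True # replicate (k - 1) False @ composition_mask ks"

lemma length_ltr_maxima_mask [simp]: "length (ltr_maxima_mask m w) = length w"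
  by (induction w arbitrary: m) auto

lemma nth_ltr_maxima_mask:
  "j < length w \<Longrightarrow> ltr_maxima_mask m w ! j \<longleftrightarrow> m < w ! j \<and> (\<forall>i<j. w ! i < w ! j)"
proof (induction w arbitrary: m j)
  case (Cons x xs)
  then show ?case
    by (cases j) (auto simp: less_Suc_eq_0_disj)
qed simp

lemma ltr_maxima_mask_append_smaller:
  "\<forall>y\<in>set t. y < x \<Longrightarrow> ltr_maxima_mask x (t @ r) = replicate (length t) False @ ltr_maxima_mask x r"
  by (induction t) (auto simp: max_def)

lemma ltr_maxima_mask_eq_composition_mask:
  "distinct w \<Longrightarrow> (w \<noteq> [] \<longrightarrow> m < hd w) \<Longrightarrow>
    ltr_maxima_mask m w = composition_mask (map length (sc_factors w))"
proof (induction w arbitrary: m rule: sc_factors.induct)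
  case (2 x xs)
  let ?t = "takeWhile (\<lambda>y. y < x) xs" and ?r = "dropWhile (\<lambda>y. y < x) xs"
  have "distinct ?r"
    using "2.prems" by auto
  moreover have "?r \<noteq> [] \<longrightarrow> x < hd ?r"
    using "2.prems" hd_dropWhile_less[of x xs] by simp
  ultimately have "ltr_maxima_mask x ?r = composition_mask (map length (sc_factors ?r))"
    by (rule "2.IH")
  moreover have "\<forall>y\<in>set ?t. y < x"
    by (auto dest: set_takeWhileD)
  then have "ltr_maxima_mask x (?t @ ?r) = replicate (length ?t) False @ ltr_maxima_mask x ?r"
    by (rule ltr_maxima_mask_append_smaller)
  moreover have "ltr_maxima_mask m (x # xs) = True # ltr_maxima_mask x (?t @ ?r)"
    using "2.prems" by (simp add: max_absorb2)
  ultimately show ?case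
    by simp
qed simp

lemma replicate_False_append_eq_iff:
  assumes "xs = [] \<or> hd xs" "ys = [] \<or> hd ys"
  shows "replicate a False @ xs = replicate b False @ ys \<longleftrightarrow> a = b \<and> xs = ys"
  using assms
proof (induction a arbitrary: b)
  case 0
  then show ?case by (cases b) auto
next
  case (Suc a)
  then show ?case by (cases b) auto
qed

lemma composition_mask_inject:
  "0 \<notin> set ks \<Longrightarrow> 0 \<notin> set ks' \<Longrightarrow> composition_mask ks = composition_mask ks' \<longleftrightarrow> ks = ks'"
proof (induction ks arbitrary: ks')
  case Nil
  then show ?case by (cases ks') auto
next
  case (Cons k ks)
  have hd_True: "composition_mask ls = [] \<or> hd (composition_mask ls)" for ls
    by (cases ls) auto
  from Cons show ?case
    by (cases ks') (auto simp: replicate_False_append_eq_iff[OF hd_True hd_True])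
qed

lemma SC_eq_iff_ltr_maxima_mask_eq:
  assumes "distinct w" "distinct w'" "0 \<notin> set w" "0 \<notin> set w'"
  shows "SC w = SC w' \<longleftrightarrow> ltr_maxima_mask 0 w = ltr_maxima_mask 0 w'"
proof -
  have pos: "0 \<notin> set (map length (sc_factors v))" for v :: "nat list"
    by (induction v rule: sc_factors.induct) auto
  have "w \<noteq> [] \<longrightarrow> 0 < hd w" "w' \<noteq> [] \<longrightarrow> 0 < hd w'"
    using assms(3,4) by (metis gr0I hd_in_set)+
  then show ?thesis
    using assms(1,2) by (simp add: SC_eq_map_length_sc_factors ltr_maxima_mask_eq_composition_mask
        composition_mask_inject[OF pos pos])
qed

subsection \<open>Inverse permutations\<close>

definition position :: "'a list \<Rightarrow> 'a \<Rightarrow> nat" where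
  "position xs v = (LEAST i. i < length xs \<and> xs ! i = v)"

lemma position_less_length_nth:
  assumes "v \<in> set xs"
  shows "position xs v < length xs \<and> xs ! position xs v = v"
proof -
  obtain i where "i < length xs \<and> xs ! i = v"
    using assms by (auto simp: in_set_conv_nth)
  then show ?thesis
    unfolding position_def by (rule LeastI)
qed

lemma position_le: "i < length xs \<Longrightarrow> xs ! i = v \<Longrightarrow> position xs v \<le> i"
  unfolding position_def by (simp add: Least_le)

lemma position_less_iff:
  assumes "v \<in> set xs"
  shows "position xs v < k \<longleftrightarrow> v \<in> set (take k xs)"
proof
  assume "position xs v < k"
  then show "v \<in> set (take k xs)"
    using position_less_length_nth[OF assms] by (metis in_set_conv_nth length_take min_less_iff_conj nth_take)
next
  assume "v \<in> set (take k xs)"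
  then obtain i where "i < k" "i < length xs" "xs ! i = v"
    by (auto simp: in_set_conv_nth)
  then show "position xs v < k"
    using position_le by (meson le_less_trans)
qed

lemma position_append_Cons: "v \<notin> set xs \<Longrightarrow> position (xs @ v # ys) v = length xs"
  using position_less_iff[of v "xs @ v # ys" "length xs"]
    position_less_iff[of v "xs @ v # ys" "Suc (length xs)"]
  by simp

lemma inj_on_position: "inj_on (position xs) (set xs)"
  by (rule inj_onI) (metis position_less_length_nth)

lemma perm_inv_eq_map_position: "perm_inv xs = map (\<lambda>v. Suc (position xs v)) [1..<Suc (length xs)]"
  by (simp add: perm_inv_def position_def)

lemma length_perm_inv [simp]: "length (perm_inv xs) = length xs"
  by (simp add: perm_inv_def del: upt_Suc)

lemma nth_perm_inv: "j < length xs \<Longrightarrow> perm_inv xs ! j = Suc (position xs (Suc j))"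
  by (simp add: perm_inv_eq_map_position nth_append del: upt_Suc)

lemma zero_notin_perm_inv: "0 \<notin> set (perm_inv xs)"
  by (auto simp: perm_inv_eq_map_position)

lemma length_perm: "is_perm n \<sigma> \<Longrightarrow> length \<sigma> = n"
  using distinct_card[of \<sigma>] by (simp add: is_perm_def)

lemma distinct_perm_inv:
  assumes "is_perm n \<sigma>"
  shows "distinct (perm_inv \<sigma>)"
proof -
  have "set [1..<Suc n] = set \<sigma>"
    using assms by (simp add: is_perm_def atLeastLessThanSuc_atLeastAtMost del: upt_Suc)
  moreover have "inj_on (\<lambda>v. Suc (position \<sigma> v)) (set \<sigma>)"
    using inj_on_position by (simp add: inj_on_def)
  ultimately show ?thesis
    unfolding perm_inv_eq_map_position length_perm[OF assms] distinct_map by simp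
qed

lemma is_perm_smaller_before_iff_greater_after:
  assumes "is_perm n (xs @ Suc j # ys)"
  shows "(\<forall>i<j. Suc i \<in> set xs) \<longleftrightarrow> (\<forall>u\<in>set ys. Suc j < u)"
proof -
  have parts: "set xs \<union> set ys = {1..n} - {Suc j}" and disjoint: "set xs \<inter> set ys = {}"
    and "Suc j \<le> n"
    using assms by (auto simp: is_perm_def)
  show ?thesis
  proof
    assume smaller_before: "\<forall>i<j. Suc i \<in> set xs"
    show "\<forall>u\<in>set ys. Suc j < u"
    proof
      fix u
      assume "u \<in> set ys"
      then have "u \<in> {1..n} - {Suc j}" "u \<notin> set xs"
        using parts disjoint by blast+
      then obtain i where "u = Suc i" "i \<noteq> j" "Suc i \<notin> set xs"
        by (cases u) auto
      then show "Suc j < u"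
        using smaller_before by (metis Suc_mono linorder_neqE_nat)
    qed
  next
    assume larger_after: "\<forall>u\<in>set ys. Suc j < u"
    show "\<forall>i<j. Suc i \<in> set xs"
    proof (intro allI impI)
      fix i
      assume "i < j"
      then have "Suc i \<in> {1..n} - {Suc j}" "Suc i \<notin> set ys"
        using \<open>Suc j \<le> n\<close> larger_after by auto
      then show "Suc i \<in> set xs"
        using parts by blast
    qed
  qed
qed

lemma ltr_maxima_mask_perm_inv_iff:
  assumes "is_perm n \<sigma>" "j < n"
  shows "ltr_maxima_mask 0 (perm_inv \<sigma>) ! j \<longleftrightarrow> Suc j \<in> rtl_minima \<sigma>"
proof -
  have \<sigma>: "distinct \<sigma>" "set \<sigma> = {1..n}" "length \<sigma> = n"
    using assms(1) length_perm[OF assms(1)] by (auto simp: is_perm_def)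
  then have "Suc j \<in> set \<sigma>"
    using assms(2) by simp
  then obtain xs ys where split: "\<sigma> = xs @ Suc j # ys"
    by (meson split_list)
  then have v: "Suc j \<notin> set xs" "Suc j \<notin> set ys"
    using \<sigma>(1) by auto
  have "take (length xs) \<sigma> = xs" "position \<sigma> (Suc j) = length xs"
    using split position_append_Cons[OF v(1)] by simp_all
  then have before: "position \<sigma> (Suc i) < position \<sigma> (Suc j) \<longleftrightarrow> Suc i \<in> set xs"
    if "i < n" for i
    using that \<sigma>(2) position_less_iff[of "Suc i" \<sigma> "length xs"] by simp
  have "ltr_maxima_mask 0 (perm_inv \<sigma>) ! j \<longleftrightarrow> (\<forall>i<j. perm_inv \<sigma> ! i < perm_inv \<sigma> ! j)"
    using assms(2) \<sigma>(3) by (simp add: nth_ltr_maxima_mask nth_perm_inv)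
  also have "\<dots> \<longleftrightarrow> (\<forall>i<j. Suc i \<in> set xs)"
    using assms(2) \<sigma>(3) before by (simp add: nth_perm_inv)
  also have "\<dots> \<longleftrightarrow> (\<forall>u\<in>set ys. Suc j < u)"
    using assms(1) split by (simp add: is_perm_smaller_before_iff_greater_after)
  also have "\<dots> \<longleftrightarrow> Suc j \<in> rtl_minima \<sigma>"
    using split v by (simp add: mem_rtl_minima_iff)
  finally show ?thesis .
qed

lemma ltr_maxima_mask_perm_inv_eq_iff:
  assumes "is_perm n \<sigma>" "is_perm n \<tau>"
  shows "ltr_maxima_mask 0 (perm_inv \<sigma>) = ltr_maxima_mask 0 (perm_inv \<tau>)
    \<longleftrightarrow> rtl_minima \<sigma> = rtl_minima \<tau>"
proof -
  have "rtl_minima \<pi> \<subseteq> Suc ` {..<n}" if "is_perm n \<pi>" for \<pi>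
    using that rtl_minima_subset[of \<pi>] by (simp add: is_perm_def image_Suc_lessThan)
  then have minima: "rtl_minima \<sigma> \<subseteq> Suc ` {..<n}" "rtl_minima \<tau> \<subseteq> Suc ` {..<n}"
    using assms by blast+
  have "ltr_maxima_mask 0 (perm_inv \<sigma>) = ltr_maxima_mask 0 (perm_inv \<tau>) \<longleftrightarrow>
      (\<forall>j<n. ltr_maxima_mask 0 (perm_inv \<sigma>) ! j = ltr_maxima_mask 0 (perm_inv \<tau>) ! j)"
    using assms by (simp add: list_eq_iff_nth_eq length_perm)
  also have "\<dots> \<longleftrightarrow> (\<forall>j<n. Suc j \<in> rtl_minima \<sigma> \<longleftrightarrow> Suc j \<in> rtl_minima \<tau>)"
    using assms by (simp add: ltr_maxima_mask_perm_inv_iff)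
  also have "\<dots> \<longleftrightarrow> rtl_minima \<sigma> = rtl_minima \<tau>"
    using minima by blast
  finally show ?thesis .
qed

theorem mainTheorem4:
  fixes n :: nat and \<sigma> \<tau> :: "nat list"
  assumes "is_perm n \<sigma>" and "is_perm n \<tau>"
  shows "SC (perm_inv \<sigma>) = SC (perm_inv \<tau>) \<longleftrightarrow> perm_equiv \<sigma> \<tau>"
proof -
  have "SC (perm_inv \<sigma>) = SC (perm_inv \<tau>) \<longleftrightarrow>
      ltr_maxima_mask 0 (perm_inv \<sigma>) = ltr_maxima_mask 0 (perm_inv \<tau>)"
    using assms by (intro SC_eq_iff_ltr_maxima_mask_eq distinct_perm_inv zero_notin_perm_inv)
  also have "\<dots> \<longleftrightarrow> rtl_minima \<sigma> = rtl_minima \<tau>"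
    using assms by (rule ltr_maxima_mask_perm_inv_eq_iff)
  also have "\<dots> \<longleftrightarrow> perm_equiv \<sigma> \<tau>"
    using assms perm_equiv_if_rtl_minima_eq perm_equiv_rtl_minima by blast
  finally show ?thesis .
qed

end
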